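(* Let $A\in\mathbb{N}^{n\times m}$ have distinct columns. If the extreme points of $\mathrm{New}(A)$ are affinely independent and the nonextremal columns of $A$, reduced modulo 2, are linearly independent over $\mathbb{F}_2$, then $C_{\mathrm{POLY\text{-}SAGE}}(A)=C_{\mathrm{NNP}}(A)$.
   Context: For $A\in\mathbb{N}^{n\times m}$ with distinct columns $a_i$ and $c\in\mathbb{R}^m$, $\mathrm{Poly}(A,c)$ is the polynomial $x\mapsto\sum_{i=1}^m c_i x^{a_i}$ on $\mathbb{R}^n$ (with $x^{a}=\prod_j x_j^{a_j}$); a column $a_i$ is even if $a_i\in(2\mathbb{N})^n$. $C_{\mathrm{NNP}}(A)=\{c:\mathrm{Poly}(A,c)(x)\ge 0\ \forall x\in\mathbb{R}^n\}$. $\mathrm{Sig}(A,c)$ is $x\mapsto\sum_i c_i\exp(a_i^\top x)$; $C_{\mathrm{NNS}}(A)=\{c:\mathrm{Sig}(A,c)\ge 0\text{ on }\mathbb{R}^n\}$; $C_{\mathrm{AGE}}(A,k)=\{c\in C_{\mathrm{NNS}}(A): c_i\ge 0\ \forall i\ne k\}$; $C_{\mathrm{SAGE}}(A)=\sum_k C_{\mathrm{AGE}}(A,k)$. The signomial representative of $c$ is $\hat c\in\mathbb{R}^m$ with $\hat c_i=c_i$ if $a_i$ is even and $\hat c_i=-|c_i|$ otherwise; $C_{\mathrm{POLY\text{-}SAGE}}(A)=\{c\in\mathbb{R}^m:\hat c\in C_{\mathrm{SAGE}}(A)\}$. $\mathrm{New}(A)=\mathrm{conv}\{a_i\}$; $a_i$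 is nonextremal if it is not an extreme point of $\mathrm{New}(A)$. *)

theory Defs
  imports "HOL-Analysis.Analysis"
begin

text \<open>A matrix A in N^(n x m) is given by its family of columns
  a :: 'm \<Rightarrow> nat ^ 'n  (columns indexed by the finite type 'm, rows by 'n).\<close>

definition Poly :: "('m::finite \<Rightarrow> nat ^ 'n::finite) \<Rightarrow> ('m \<Rightarrow> real) \<Rightarrow> real ^ 'n \<Rightarrow> real" where
  "Poly a c x = (\<Sum>i\<in>UNIV. c i * (\<Prod>j\<in>UNIV. (x $ j) ^ (a i $ j)))"

definition C_NNP :: "('m::finite \<Rightarrow> nat ^ 'n::finite) \<Rightarrow> ('m \<Rightarrow> real) set" where
  "C_NNP a = {c. \<forall>x. Poly a c x \<ge> 0}"

definition col_real :: "nat ^ 'n::finite \<Rightarrow> real ^ 'n" where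
  "col_real v = (\<chi> j. real (v $ j))"

definition Sig :: "('m::finite \<Rightarrow> nat ^ 'n::finite) \<Rightarrow> ('m \<Rightarrow> real) \<Rightarrow> real ^ 'n \<Rightarrow> real" where
  "Sig a c x = (\<Sum>i\<in>UNIV. c i * exp (col_real (a i) \<bullet> x))"

definition C_NNS :: "('m::finite \<Rightarrow> nat ^ 'n::finite) \<Rightarrow> ('m \<Rightarrow> real) set" where
  "C_NNS a = {c. \<forall>x. Sig a c x \<ge> 0}"

definition C_AGE :: "('m::finite \<Rightarrow> nat ^ 'n::finite) \<Rightarrow> 'm \<Rightarrow> ('m \<Rightarrow> real) set" where
  "C_AGE a k = {c \<in> C_NNS a. \<forall>i. i \<noteq> k \<longrightarrow> c i \<ge> 0}"

definition C_SAGE :: "('m::finite \<Rightarrow> nat ^ 'n::finite) \<Rightarrow> ('m \<Rightarrow> real) set" where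
  "C_SAGE a = {c. \<exists>\<nu>. (\<forall>k. \<nu> k \<in> C_AGE a k) \<and> c = (\<lambda>i. \<Sum>k\<in>UNIV. \<nu> k i)}"

definition even_col :: "nat ^ 'n::finite \<Rightarrow> bool" where
  "even_col v \<longleftrightarrow> (\<forall>j. even (v $ j))"

definition sig_rep :: "('m::finite \<Rightarrow> nat ^ 'n::finite) \<Rightarrow> ('m \<Rightarrow> real) \<Rightarrow> ('m \<Rightarrow> real)" where
  "sig_rep a c = (\<lambda>i. if even_col (a i) then c i else - \<bar>c i\<bar>)"

definition C_POLY_SAGE :: "('m::finite \<Rightarrow> nat ^ 'n::finite) \<Rightarrow> ('m \<Rightarrow> real) set" where
  "C_POLY_SAGE a = {c. sig_rep a c \<in> C_SAGE a}"

definition Newton :: "('m::finite \<Rightarrow> nat ^ 'n::finite) \<Rightarrow> (real ^ 'n) set" where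
  "Newton a = convex hull (range (\<lambda>i. col_real (a i)))"

definition nonextremal :: "('m::finite \<Rightarrow> nat ^ 'n::finite) \<Rightarrow> 'm set" where
  "nonextremal a = {i. \<not> (col_real (a i) extreme_point_of Newton a)}"

text \<open>Since the
  only F2-scalars are 0 and 1, a linear dependence is exactly a nonempty
  subset S of I whose columns sum to the zero vector mod 2.\<close>
definition F2_lin_indep_mod2 :: "('m::finite \<Rightarrow> nat ^ 'n::finite) \<Rightarrow> 'm set \<Rightarrow> bool" where
  "F2_lin_indep_mod2 a I \<longleftrightarrow>
     (\<forall>S\<subseteq>I. (\<forall>j. even (\<Sum>i\<in>S. a i $ j)) \<longrightarrow> S = {})"

end

theory Submission
  imports Defs
begin

text \<open>Let E index the vertices of the Newton polytope. Every other column a k is a convex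
  combination of the vertex columns with weights lam k, and affine independence lets any values
  ln (u j) at the vertices be interpolated by an affine function. Substituting x = s * exp y
  (s a sign vector) therefore turns nonnegativity of the polynomial into
    0 \<le> (\<Sum>k. c k * (a k)(s) * U k u)   for all s and all u > 0 on E,
  where U j u = u j at vertices and U k u = (\<Prod>j\<in>E. u j powr lam k j) otherwise. Concentrating u
  on one vertex shows that the vertex terms are nonnegative and independent of s, and
  F2-independence of the non-vertex columns lets s make every non-vertex term equal to
  -|c k|; what remains is the same inequality for the signomial representative of c. Since
  each U k is concave and positively homogeneous, a separating hyperplane argument over its
  tangent planes splits this inequality into one AGE inequality per non-vertex.
  The reverse inclusion holds for every A, because Poly(A, c)(x) \<ge> Poly(A, c')(|x|) for the
  signomial representative c'.\<close>

section \<open>Monomials at sign vectors\<close>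

definition monomial :: "nat ^ 'n::finite \<Rightarrow> real ^ 'n \<Rightarrow> real" where
  "monomial v x = (\<Prod>j\<in>UNIV. (x $ j) ^ (v $ j))"

definition sign_vector :: "real ^ 'n::finite \<Rightarrow> bool" where
  "sign_vector s \<longleftrightarrow> (\<forall>j. \<bar>s $ j\<bar> = 1)"

definition sign_flip :: "'n::finite \<Rightarrow> real ^ 'n" where
  "sign_flip j0 = (\<chi> j. if j = j0 then -1 else 1)"

lemma Poly_eq_sum_monomial: "Poly a c x = (\<Sum>i\<in>UNIV. c i * monomial (a i) x)"
  by (simp add: Poly_def monomial_def)

lemma monomial_mult: "monomial v (\<chi> j. s $ j * t $ j) = monomial v s * monomial v t"
  by (simp add: monomial_def power_mult_distrib prod.distrib)

lemma monomial_ones [simp]: "monomial v (\<chi> j. 1) = 1"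
  by (simp add: monomial_def)

lemma monomial_sign_flip: "monomial v (sign_flip j0) = (-1) ^ (v $ j0)"
proof -
  have "monomial v (sign_flip j0) = (\<Prod>j\<in>UNIV. if j = j0 then (-1) ^ (v $ j) else 1)"
    unfolding monomial_def sign_flip_def by (intro prod.cong) auto
  then show ?thesis by (simp add: prod.delta)
qed

lemma monomial_prod_power:
  "monomial v (\<chi> j. \<Prod>k\<in>I. (T k $ j) ^ m k) = (\<Prod>k\<in>I. monomial v (T k) ^ m k)"
proof -
  have "monomial v (\<chi> j. \<Prod>k\<in>I. (T k $ j) ^ m k) = (\<Prod>j\<in>UNIV. \<Prod>k\<in>I. ((T k $ j) ^ (v $ j)) ^ m k)"
    unfolding monomial_def by (simp add: prod_power_distrib flip: power_mult) (simp add: mult.commute)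
  also have "\<dots> = (\<Prod>k\<in>I. \<Prod>j\<in>UNIV. ((T k $ j) ^ (v $ j)) ^ m k)"
    by (rule prod.swap)
  finally show ?thesis
    by (simp add: monomial_def prod_power_distrib)
qed

lemma sign_vector_ones: "sign_vector (\<chi> j. 1)"
  by (simp add: sign_vector_def)

lemma sign_vector_sign_flip: "sign_vector (sign_flip j0)"
  by (simp add: sign_vector_def sign_flip_def)

lemma sign_vector_mult: "sign_vector s \<Longrightarrow> sign_vector t \<Longrightarrow> sign_vector (\<chi> j. s $ j * t $ j)"
  by (simp add: sign_vector_def abs_mult)

lemma sign_vector_prod_power:
  "(\<And>k. k \<in> I \<Longrightarrow> sign_vector (T k)) \<Longrightarrow> sign_vector (\<chi> j. \<Prod>k\<in>I. (T k $ j) ^ m k)"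
  by (simp add: sign_vector_def abs_prod power_abs)

lemma monomial_sign_vector_cases:
  assumes "sign_vector s"
  shows "monomial v s = 1 \<or> monomial v s = -1"
proof -
  have "\<bar>monomial v s\<bar> = 1"
    using assms by (simp add: monomial_def sign_vector_def abs_prod power_abs)
  then show ?thesis by linarith
qed

lemma monomial_even_col:
  assumes "sign_vector s" and "even_col v"
  shows "monomial v s = 1"
  unfolding monomial_def
proof (intro prod.neutral ballI)
  fix j
  have "even (v $ j)" "\<bar>s $ j\<bar> = 1"
    using assms by (auto simp: even_col_def sign_vector_def)
  then show "(s $ j) ^ (v $ j) = 1" by (metis power_even_abs power_one)
qed

lemma monomial_sign_product:
  fixes T :: "'k::finite \<Rightarrow> real ^ 'n::finite"
  assumes "\<And>k. k \<in> I \<Longrightarrow> sign_vector (T k)"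
  shows "monomial v (\<chi> j. \<Prod>k\<in>I. (T k $ j) ^ m k) = (-1) ^ (\<Sum>k\<in>{k\<in>I. monomial v (T k) = -1}. m k)"
proof -
  have "(\<Prod>k\<in>I. monomial v (T k) ^ m k) = (\<Prod>k\<in>I. if monomial v (T k) = -1 then (-1) ^ m k else 1)"
  proof (intro prod.cong refl)
    fix k assume "k \<in> I"
    then show "monomial v (T k) ^ m k = (if monomial v (T k) = -1 then (-1) ^ m k else 1)"
      using monomial_sign_vector_cases[OF assms, of k v] by auto
  qed
  also have "\<dots> = (-1) ^ (\<Sum>k\<in>{k\<in>I. monomial v (T k) = -1}. m k)"
    by (simp add: prod.inter_filter power_sum)
  finally show ?thesis by (simp only: monomial_prod_power)
qed

lemma F2_lin_indep_mod2_subset: "F2_lin_indep_mod2 a J \<Longrightarrow> I \<subseteq> J \<Longrightarrow> F2_lin_indep_mod2 a I"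
  unfolding F2_lin_indep_mod2_def by blast

lemma F2_lin_indep_mod2_not_even_col:
  assumes "F2_lin_indep_mod2 a I" and "i \<in> I"
  shows "\<not> even_col (a i)"
proof
  assume "even_col (a i)"
  then have "\<forall>j. even (\<Sum>k\<in>{i}. a k $ j)" by (simp add: even_col_def)
  then show False using assms unfolding F2_lin_indep_mod2_def by blast
qed

text \<open>Flip coordinate j and undo the resulting flips on I with the T i; if the monomial of k
  were never flipped, the columns k and {i. T i flips k} would sum to 0 mod 2.\<close>
lemma sign_vector_flipping_one:
  fixes a :: "'m::finite \<Rightarrow> nat ^ 'n::finite"
  assumes indep: "F2_lin_indep_mod2 a (insert k I)" and k: "k \<notin> I"
    and T: "\<And>i. i \<in> I \<Longrightarrow> sign_vector (T i)"
      "\<And>i l. i \<in> I \<Longrightarrow> l \<in> I \<Longrightarrow> monomial (a l) (T i) = (if l = i then -1 else 1)"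
  shows "\<exists>\<rho>. sign_vector \<rho> \<and> (\<forall>l\<in>I. monomial (a l) \<rho> = 1) \<and> monomial (a k) \<rho> = -1"
proof (rule ccontr)
  assume none: "\<not> ?thesis"
  define S where "S = {i\<in>I. monomial (a k) (T i) = -1}"
  define \<rho> where "\<rho> j = (\<chi> j'. sign_flip j $ j' * (\<chi> j'. \<Prod>i\<in>I. (T i $ j') ^ (a i $ j)) $ j')" for j
  have monomial_\<rho>: "monomial (a l) (\<rho> j)
      = (-1) ^ (a l $ j + (\<Sum>i\<in>{i\<in>I. monomial (a l) (T i) = -1}. a i $ j))" for l j
    unfolding \<rho>_def monomial_mult monomial_sign_flip
    using monomial_sign_product[of I T "a l" "\<lambda>i. a i $ j", OF T(1)] by (simp add: power_add)
  have "even (\<Sum>i\<in>insert k S. a i $ j)" for j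
  proof -
    have "sign_vector (\<rho> j)"
      unfolding \<rho>_def by (intro sign_vector_mult sign_vector_sign_flip sign_vector_prod_power T(1))
    moreover have "monomial (a l) (\<rho> j) = 1" if l: "l \<in> I" for l
    proof -
      have "{i\<in>I. monomial (a l) (T i) = -1} = {l}" using T(2)[OF _ l] l by (auto split: if_splits)
      then show ?thesis by (simp add: monomial_\<rho>)
    qed
    ultimately have "monomial (a k) (\<rho> j) = 1"
      using none monomial_sign_vector_cases by blast
    moreover have "k \<notin> S" using k by (simp add: S_def)
    ultimately show ?thesis
      by (simp add: monomial_\<rho> minus_one_power_iff S_def split: if_splits)
  qed
  moreover have "insert k S \<subseteq> insert k I" by (auto simp: S_def)
  ultimately show False using indep unfolding F2_lin_indep_mod2_def by blast
qed

lemma F2_lin_indep_mod2_sign_realizable: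
  fixes a :: "'m::finite \<Rightarrow> nat ^ 'n::finite"
  assumes "F2_lin_indep_mod2 a I" and "\<And>i. i \<in> I \<Longrightarrow> \<tau> i = 1 \<or> \<tau> i = -1"
  shows "\<exists>s. sign_vector s \<and> (\<forall>i\<in>I. monomial (a i) s = \<tau> i)"
  using finite[of I] assms
proof (induction I arbitrary: \<tau> rule: finite_induct)
  case empty
  then show ?case using sign_vector_ones by blast
next
  case (insert k I)
  have indep: "F2_lin_indep_mod2 a I"
    using insert.prems(1) F2_lin_indep_mod2_subset by blast
  have "\<exists>t. sign_vector t \<and> (\<forall>l\<in>I. monomial (a l) t = (if l = i then -1 else 1))" for i
    by (rule insert.IH[OF indep]) simp
  then obtain T where "\<And>i. sign_vector (T i)"
    "\<And>i l. l \<in> I \<Longrightarrow> monomial (a l) (T i) = (if l = i then -1 else 1)"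
    by metis
  then obtain \<rho> where \<rho>: "sign_vector \<rho>" "\<forall>l\<in>I. monomial (a l) \<rho> = 1" "monomial (a k) \<rho> = -1"
    using sign_vector_flipping_one[OF insert.prems(1) insert.hyps(2)] by blast
  obtain s where s: "sign_vector s" "\<forall>i\<in>I. monomial (a i) s = \<tau> i"
    using insert.IH[OF indep] insert.prems(2) by blast
  show ?case
  proof (cases "monomial (a k) s = \<tau> k")
    case False
    then have "monomial (a k) s = - \<tau> k"
      using monomial_sign_vector_cases[OF s(1)] insert.prems(2) by force
    then show ?thesis
      using s \<rho> by (intro exI[of _ "\<chi> j. s $ j * \<rho> $ j"]) (auto simp: monomial_mult sign_vector_mult)
  qed (use s in auto)
qed

section \<open>Exponential substitution and nonnegativity of polynomial SAGE certificates\<close>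

lemma Poly_sign_exp:
  "Poly a c (\<chi> j. s $ j * exp (x $ j)) = (\<Sum>i\<in>UNIV. c i * monomial (a i) s * exp (col_real (a i) \<bullet> x))"
  unfolding Poly_eq_sum_monomial
proof (intro sum.cong refl)
  fix i
  have "col_real (a i) \<bullet> x = (\<Sum>j\<in>UNIV. real (a i $ j) * x $ j)"
    by (simp add: inner_vec_def col_real_def)
  then have "monomial (a i) (\<chi> j. exp (x $ j)) = exp (col_real (a i) \<bullet> x)"
    by (simp add: monomial_def exp_sum exp_of_nat_mult)
  then show "c i * monomial (a i) (\<chi> j. s $ j * exp (x $ j)) = c i * monomial (a i) s * exp (col_real (a i) \<bullet> x)"
    using monomial_mult[of "a i" s "\<chi> j. exp (x $ j)"] by simp
qed

lemma C_SAGE_subset_C_NNS: "C_SAGE a \<subseteq> C_NNS a"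
proof
  fix c assume "c \<in> C_SAGE a"
  then obtain \<nu> where \<nu>: "\<And>k. \<nu> k \<in> C_AGE a k" and c: "c = (\<lambda>i. \<Sum>k\<in>UNIV. \<nu> k i)"
    unfolding C_SAGE_def by blast
  have "Sig a c x = (\<Sum>k\<in>UNIV. Sig a (\<nu> k) x)" for x
    unfolding Sig_def c by (simp add: sum_distrib_right) (rule sum.swap)
  then show "c \<in> C_NNS a"
    using \<nu> by (simp add: C_NNS_def C_AGE_def sum_nonneg)
qed

lemma C_NNS_Poly_nonneg_pos:
  assumes "c \<in> C_NNS a" and "\<forall>j. 0 < y $ j"
  shows "0 \<le> Poly a c y"
proof -
  have y: "(\<chi> j. (\<chi> j. 1) $ j * exp ((\<chi> j. ln (y $ j)) $ j)) = y"
    using assms(2) by (simp add: vec_eq_iff)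
  have "Poly a c y = Sig a c (\<chi> j. ln (y $ j))"
    using Poly_sign_exp[of a c "\<chi> j. 1" "\<chi> j. ln (y $ j)"] unfolding y by (simp add: Sig_def)
  then show ?thesis using assms(1) by (simp add: C_NNS_def)
qed

lemma C_NNS_Poly_nonneg:
  assumes "c \<in> C_NNS a" and "\<forall>j. 0 \<le> y $ j"
  shows "0 \<le> Poly a c y"
proof -
  have "((\<lambda>\<epsilon>. Poly a c (\<chi> j. y $ j + \<epsilon>)) \<longlongrightarrow> Poly a c (\<chi> j. y $ j + 0)) (at_right 0)"
    unfolding Poly_def by (intro tendsto_intros)
  moreover have "\<forall>\<^sub>F \<epsilon> in at_right 0. 0 \<le> Poly a c (\<chi> j. y $ j + \<epsilon>)"
  proof (rule eventually_mono[OF eventually_at_right_less])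
    fix \<epsilon> :: real assume "0 < \<epsilon>"
    then show "0 \<le> Poly a c (\<chi> j. y $ j + \<epsilon>)"
      using assms by (intro C_NNS_Poly_nonneg_pos) (auto intro: add_nonneg_pos)
  qed
  ultimately have "0 \<le> Poly a c (\<chi> j. y $ j + 0)"
    by (rule tendsto_lowerbound) simp
  then show ?thesis by simp
qed

lemma Poly_sig_rep_abs_le: "Poly a (sig_rep a c) (\<chi> j. \<bar>x $ j\<bar>) \<le> Poly a c x"
  unfolding Poly_eq_sum_monomial
proof (intro sum_mono)
  fix i
  have abs_monomial: "monomial (a i) (\<chi> j. \<bar>x $ j\<bar>) = \<bar>monomial (a i) x\<bar>"
    by (simp add: monomial_def abs_prod power_abs)
  show "sig_rep a c i * monomial (a i) (\<chi> j. \<bar>x $ j\<bar>) \<le> c i * monomial (a i) x"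
  proof (cases "even_col (a i)")
    case True
    then have "\<bar>monomial (a i) x\<bar> = monomial (a i) x"
      unfolding monomial_def abs_prod
      by (intro prod.cong refl) (simp add: power_abs power_even_abs even_col_def)
    then show ?thesis using True by (simp add: sig_rep_def abs_monomial)
  next
    case False
    have "- \<bar>c i * monomial (a i) x\<bar> \<le> c i * monomial (a i) x" by simp
    then show ?thesis using False by (simp add: sig_rep_def abs_monomial abs_mult)
  qed
qed

lemma C_POLY_SAGE_subset_C_NNP: "C_POLY_SAGE a \<subseteq> C_NNP a"
proof
  fix c assume "c \<in> C_POLY_SAGE a"
  then have "sig_rep a c \<in> C_NNS a"
    using C_SAGE_subset_C_NNS by (auto simp: C_POLY_SAGE_def)
  then have "0 \<le> Poly a c x" for x
    using C_NNS_Poly_nonneg[of "sig_rep a c" a "\<chi> j. \<bar>x $ j\<bar>"] Poly_sig_rep_abs_le[of a c x] by simp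
  then show "c \<in> C_NNP a" by (simp add: C_NNP_def)
qed

section \<open>Weighted geometric means and barycentric coordinates\<close>

definition geom_mean :: "'i set \<Rightarrow> ('i \<Rightarrow> real) \<Rightarrow> ('i \<Rightarrow> real) \<Rightarrow> real" where
  "geom_mean E l u = (\<Prod>j\<in>E. u j powr l j)"

definition geom_extension :: "'i set \<Rightarrow> ('i \<Rightarrow> 'i \<Rightarrow> real) \<Rightarrow> ('i \<Rightarrow> real) \<Rightarrow> 'i \<Rightarrow> real" where
  "geom_extension E lam u k = (if k \<in> E then u k else geom_mean E (lam k) u)"

definition barycentric :: "'i set \<Rightarrow> ('i \<Rightarrow> 'a::real_vector) \<Rightarrow> ('i \<Rightarrow> real) \<Rightarrow> 'a \<Rightarrow> bool" where
  "barycentric E v l y \<longleftrightarrow> (\<forall>j\<in>E. 0 \<le> l j) \<and> sum l E = 1 \<and> (\<Sum>j\<in>E. l j *\<^sub>R v j) = y"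

lemma geom_mean_pos: "\<forall>j\<in>E. 0 < u j \<Longrightarrow> 0 < geom_mean E l u"
  unfolding geom_mean_def by (intro prod_pos) auto

lemma geom_mean_scale:
  assumes "finite E" "sum l E = 1" "0 < t" "\<forall>j\<in>E. 0 < u j"
  shows "geom_mean E l (\<lambda>j. t * u j) = t * geom_mean E l u"
proof -
  have "geom_mean E l (\<lambda>j. t * u j) = (\<Prod>j\<in>E. t powr l j) * geom_mean E l u"
    unfolding geom_mean_def using assms(3,4) by (simp add: powr_mult prod.distrib)
  also have "(\<Prod>j\<in>E. t powr l j) = t"
    using powr_sum[of t l E] assms by simp
  finally show ?thesis .
qed

lemma geom_mean_le_arith_mean:
  assumes "finite E" "\<forall>j\<in>E. 0 \<le> l j" "sum l E = 1" "\<forall>j\<in>E. 0 < r j"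
  shows "geom_mean E l r \<le> (\<Sum>j\<in>E. l j * r j)"
proof -
  have "E \<noteq> {}" using assms(3) by auto
  have "geom_mean E l r = exp (\<Sum>j\<in>E. l j *\<^sub>R ln (r j))"
    unfolding geom_mean_def using assms(1,4)
    by (auto simp: exp_sum powr_def mult.commute intro!: prod.cong)
  also have "\<dots> \<le> (\<Sum>j\<in>E. l j * exp (ln (r j)))"
    using convex_on_sum[OF assms(1) \<open>E \<noteq> {}\<close> exp_convex] assms(2,3) by auto
  also have "\<dots> = (\<Sum>j\<in>E. l j * r j)"
    using assms(4) by simp
  finally show ?thesis .
qed

text \<open>The geometric mean is concave and positively homogeneous, so it lies below each
  of its tangent planes at positive points; the tangent weights reproduce it at the
  point of tangency (Euler's identity).\<close>
lemma geom_mean_le_tangent: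
  assumes "finite E" "\<forall>j\<in>E. 0 \<le> l j" "sum l E = 1" "\<forall>j\<in>E. 0 < u j" "\<forall>j\<in>E. 0 < v j"
  shows "geom_mean E l v \<le> (\<Sum>j\<in>E. (l j * geom_mean E l u / u j) * v j)"
proof -
  have pos: "0 < geom_mean E l u" using assms(4) by (rule geom_mean_pos)
  have "geom_mean E l (\<lambda>j. v j / u j) = geom_mean E l v / geom_mean E l u"
    unfolding geom_mean_def using assms(4,5)
    by (simp add: powr_divide less_imp_le prod_dividef)
  then have "geom_mean E l v = geom_mean E l u * geom_mean E l (\<lambda>j. v j / u j)"
    using pos by simp
  also have "\<dots> \<le> geom_mean E l u * (\<Sum>j\<in>E. l j * (v j / u j))"
    using pos assms by (intro mult_left_mono geom_mean_le_arith_mean) auto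
  also have "\<dots> = (\<Sum>j\<in>E. (l j * geom_mean E l u / u j) * v j)"
    by (simp add: sum_distrib_left mult.assoc mult.left_commute)
  finally show ?thesis .
qed

lemma sum_tangent_weights:
  assumes "sum l E = 1" "\<forall>j\<in>E. 0 < u j"
  shows "(\<Sum>j\<in>E. (l j * geom_mean E l u / u j) * u j) = geom_mean E l u"
proof -
  have "(\<Sum>j\<in>E. (l j * geom_mean E l u / u j) * u j) = (\<Sum>j\<in>E. l j * geom_mean E l u)"
    using assms(2) by (intro sum.cong) auto
  also have "\<dots> = geom_mean E l u"
    using assms(1) by (simp flip: sum_distrib_right)
  finally show ?thesis .
qed

lemma geom_mean_exp_inner:
  fixes v :: "'i \<Rightarrow> 'a::real_inner"
  assumes "finite E" "barycentric E v l y"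
  shows "geom_mean E l (\<lambda>j. exp (v j \<bullet> x)) = exp (y \<bullet> x)"
proof -
  have "geom_mean E l (\<lambda>j. exp (v j \<bullet> x)) = exp (\<Sum>j\<in>E. l j * (v j \<bullet> x))"
    unfolding geom_mean_def using assms(1) by (simp add: powr_def exp_sum mult.commute)
  also have "(\<Sum>j\<in>E. l j * (v j \<bullet> x)) = y \<bullet> x"
    using assms(2) by (auto simp: barycentric_def inner_sum_left)
  finally show ?thesis .
qed

lemma geom_extension_exp_inner:
  fixes v :: "'i \<Rightarrow> 'a::real_inner"
  assumes "finite E" "\<And>i. i \<notin> E \<Longrightarrow> barycentric E v (lam i) (v i)"
  shows "geom_extension E lam (\<lambda>j. exp (v j \<bullet> x)) k = exp (v k \<bullet> x)"
  using assms by (simp add: geom_extension_def geom_mean_exp_inner)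

lemma geom_extension_scale:
  assumes "finite E" "\<And>i. i \<notin> E \<Longrightarrow> sum (lam i) E = 1" "0 < t" "\<forall>j\<in>E. 0 < u j"
  shows "geom_extension E lam (\<lambda>j. t * u j) k = t * geom_extension E lam u k"
  using assms by (simp add: geom_extension_def geom_mean_scale)

lemma affine_independent_interpolation:
  fixes v :: "'i \<Rightarrow> 'a::euclidean_space" and t :: "'i \<Rightarrow> real"
  assumes inj: "inj_on v E" and indep: "\<not> affine_dependent (v ` E)"
  shows "\<exists>x s. \<forall>j\<in>E. v j \<bullet> x + s = t j"
proof (cases "E = {}")
  case False
  then obtain j0 where j0: "j0 \<in> E" by blast
  define B where "B = (\<lambda>y. - v j0 + y) ` (v ` E - {v j0})"
  have "independent B"
    using indep j0 affine_dependent_iff_dependent2[of "v j0" "v ` E"] unfolding B_def by blast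
  then obtain g where g: "linear g"
    "\<And>y. y \<in> B \<Longrightarrow> g y = t (inv_into E v (y + v j0)) - t j0"
    using linear_independent_extend[of B "\<lambda>y. t (inv_into E v (y + v j0)) - t j0"] by blast
  define x where "x = adjoint g 1"
  have "v j \<bullet> x + (t j0 - v j0 \<bullet> x) = t j" if j: "j \<in> E" for j
  proof (cases "j = j0")
    case False
    then have "v j - v j0 \<in> B" using inj j j0 by (auto simp: B_def inj_on_eq_iff)
    then have "g (v j - v j0) = t j - t j0" using inj j by (simp add: g(2))
    moreover have "g (v j - v j0) = (v j - v j0) \<bullet> x"
      using adjoint_works[OF g(1), of "v j - v j0" 1] by (simp add: x_def)
    ultimately show ?thesis by (simp add: inner_diff_left)
  qed simp
  then show ?thesis by blast
qed simp

lemma exp_inner_eq_geom_extension: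
  fixes v :: "'i \<Rightarrow> 'a::real_inner"
  assumes "finite E" and interp: "\<And>t. \<exists>x s. \<forall>j\<in>E. v j \<bullet> x + s = t j"
    and bary: "\<And>i. i \<notin> E \<Longrightarrow> barycentric E v (lam i) (v i)"
    and u: "\<forall>j\<in>E. 0 < u j"
  shows "\<exists>x t. 0 < t \<and> (\<forall>k. exp (v k \<bullet> x) = t * geom_extension E lam u k)"
proof -
  obtain x s where xs: "\<forall>j\<in>E. v j \<bullet> x + s = ln (u j)"
    using interp[of "\<lambda>j. ln (u j)"] by blast
  have "\<forall>j\<in>E. exp (v j \<bullet> x) = exp (- s) * u j"
  proof
    fix j assume "j \<in> E"
    then have "v j \<bullet> x = ln (u j) + - s" using xs by force
    then have "exp (v j \<bullet> x) = exp (ln (u j)) * exp (- s)" by (simp only: exp_add)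
    then show "exp (v j \<bullet> x) = exp (- s) * u j" using u \<open>j \<in> E\<close> by simp
  qed
  then have "geom_extension E lam (\<lambda>j. exp (v j \<bullet> x)) k = geom_extension E lam (\<lambda>j. exp (- s) * u j) k" for k
    by (simp add: geom_extension_def geom_mean_def)
  then have "exp (v k \<bullet> x) = exp (- s) * geom_extension E lam u k" for k
    using assms(1) bary u geom_extension_exp_inner[of E v lam x k]
    by (simp add: geom_extension_scale barycentric_def)
  then show ?thesis by (intro exI[of _ x] exI[of _ "exp (- s)"]) simp
qed

lemma barycentric_lt_one:
  assumes "finite E" "barycentric E v l (v i)" "inj_on v (insert i E)" "i \<notin> E" "j \<in> E"
  shows "l j < 1"
proof (rule ccontr)
  assume "\<not> l j < 1"
  have nonneg: "\<forall>k\<in>E - {j}. 0 \<le> l k" and sum: "l j + sum l (E - {j}) = 1"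
    using assms(2) sum.remove[OF assms(1,5), of l] by (auto simp: barycentric_def)
  then have "sum l (E - {j}) = 0"
    using \<open>\<not> l j < 1\<close> sum_nonneg[of "E - {j}" l] by fastforce
  then have "\<forall>k\<in>E - {j}. l k = 0" "l j = 1"
    using nonneg sum sum_nonneg_eq_0_iff[of "E - {j}" l] assms(1) by auto
  then have "v i = v j"
    using assms(2) sum.remove[OF assms(1,5), of "\<lambda>k. l k *\<^sub>R v k"] by (simp add: barycentric_def)
  then show False using assms(3-5) by (auto simp: inj_on_def)
qed

lemma geom_mean_corner:
  assumes "finite E" "j0 \<in> E" "sum l E = 1" "0 < \<epsilon>"
  shows "geom_mean E l (\<lambda>j. if j = j0 then 1 else \<epsilon>) = \<epsilon> powr (1 - l j0)"
proof -
  have "geom_mean E l (\<lambda>j. if j = j0 then 1 else \<epsilon>) = (\<Prod>j\<in>E - {j0}. \<epsilon> powr l j)"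
    unfolding geom_mean_def prod.remove[OF assms(1,2)] by simp
  also have "\<dots> = \<epsilon> powr (sum l (E - {j0}))"
    using assms(4) by (simp add: powr_sum)
  also have "sum l (E - {j0}) = 1 - l j0"
    using assms(3) sum.remove[OF assms(1,2), of l] by linarith
  finally show ?thesis .
qed

lemma tendsto_geom_extension_corner:
  assumes "finite E" "j0 \<in> E" and lam: "\<And>i. i \<notin> E \<Longrightarrow> sum (lam i) E = 1 \<and> lam i j0 < 1"
  shows "((\<lambda>\<epsilon>. geom_extension E lam (\<lambda>j. if j = j0 then 1 else \<epsilon>) k)
    \<longlongrightarrow> (if k = j0 then 1 else 0)) (at_right 0)"
proof (cases "k \<in> E")
  case True
  then show ?thesis by (simp add: geom_extension_def tendsto_ident_at)
next
  case False
  have "((\<lambda>\<epsilon>::real. \<epsilon> powr (1 - lam k j0)) \<longlongrightarrow> 0) (at_right 0)"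
    using lam[OF False]
    by (intro tendsto_zero_powrI tendsto_ident_at eventually_at_right_less[THEN eventually_mono]) auto
  moreover have "\<forall>\<^sub>F \<epsilon> in at_right 0.
      \<epsilon> powr (1 - lam k j0) = geom_extension E lam (\<lambda>j. if j = j0 then 1 else \<epsilon>) k"
    using eventually_at_right_less
    by (rule eventually_mono) (use False assms lam in \<open>simp add: geom_extension_def geom_mean_corner\<close>)
  ultimately show ?thesis
    using False assms(2) by (auto intro: Lim_transform_eventually)
qed

text \<open>Evaluate at u = 1 on j0 and u = \<epsilon> elsewhere on E: every non-vertex term is of
  order \<epsilon> to the power 1 - lam i j0 > 0, hence vanishes as \<epsilon> \<rightarrow> 0.\<close>
lemma geom_extension_coeff_nonneg:
  fixes e :: "'i::finite \<Rightarrow> real"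
  assumes j0: "j0 \<in> E"
    and lam: "\<And>i. i \<notin> E \<Longrightarrow> sum (lam i) E = 1 \<and> lam i j0 < 1"
    and nonneg: "\<And>u. \<forall>j\<in>E. 0 < u j \<Longrightarrow> 0 \<le> (\<Sum>k\<in>UNIV. e k * geom_extension E lam u k)"
  shows "0 \<le> e j0"
proof -
  let ?u = "\<lambda>\<epsilon> j. if j = j0 then 1 else \<epsilon>"
  have "((\<lambda>\<epsilon>. \<Sum>k\<in>UNIV. e k * geom_extension E lam (?u \<epsilon>) k)
      \<longlongrightarrow> (\<Sum>k\<in>UNIV. e k * (if k = j0 then 1 else 0))) (at_right 0)"
    by (intro tendsto_intros tendsto_geom_extension_corner finite j0 lam)
  moreover have "\<forall>\<^sub>F \<epsilon> in at_right 0. 0 \<le> (\<Sum>k\<in>UNIV. e k * geom_extension E lam (?u \<epsilon>) k)"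
    using eventually_at_right_less by (rule eventually_mono) (simp add: nonneg)
  ultimately have "0 \<le> (\<Sum>k\<in>UNIV. e k * (if k = j0 then 1 else 0))"
    by (rule tendsto_lowerbound) simp
  also have "\<dots> = (\<Sum>k\<in>UNIV. if k = j0 then e k else 0)"
    by (intro sum.cong) auto
  finally show ?thesis by simp
qed

section \<open>Splitting the geometric mean inequality\<close>

text \<open>Row i of a dominating matrix is the vertex part of an AGE certificate for the term
  d i at the non-vertex i; the budget set collects the column sums such certificates use.\<close>
definition dominating :: "'m set \<Rightarrow> ('m \<Rightarrow> 'm \<Rightarrow> real) \<Rightarrow> ('m \<Rightarrow> real) \<Rightarrow> real ^ ('m::finite \<times> 'm) \<Rightarrow> bool" where
  "dominating E lam d W \<longleftrightarrow> (\<forall>p. 0 \<le> W $ p) \<and> (\<forall>i j. i \<in> E \<or> j \<notin> E \<longrightarrow> W $ (i, j) = 0) \<and>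
     (\<forall>i. i \<notin> E \<longrightarrow> (\<forall>u. (\<forall>j\<in>E. 0 < u j) \<longrightarrow> d i * geom_mean E (lam i) u \<le> (\<Sum>j\<in>E. W $ (i, j) * u j)))"

definition budget_set :: "'m set \<Rightarrow> ('m \<Rightarrow> 'm \<Rightarrow> real) \<Rightarrow> ('m \<Rightarrow> real) \<Rightarrow> (real ^ 'm::finite) set" where
  "budget_set E lam d = {y. (\<forall>j. j \<notin> E \<longrightarrow> y $ j = 0) \<and>
     (\<exists>W. dominating E lam d W \<and> (\<forall>j\<in>E. (\<Sum>i\<in>-E. W $ (i, j)) \<le> y $ j))}"

lemma closed_dominating: "closed {W. dominating E lam d W}"
  unfolding dominating_def Ball_def
  by (intro closed_Collect_conj closed_Collect_all closed_Collect_imp open_Collect_const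
      closed_Collect_le closed_Collect_eq continuous_intros)

lemma convex_dominating: "convex {W. dominating E lam d W}"
proof (rule convexI, simp only: mem_Collect_eq)
  fix W V and \<alpha> \<beta> :: real
  assume W: "dominating E lam d W" and V: "dominating E lam d V" and "0 \<le> \<alpha>" "0 \<le> \<beta>" "\<alpha> + \<beta> = 1"
  have "d i * geom_mean E (lam i) u \<le> (\<Sum>j\<in>E. (\<alpha> *\<^sub>R W + \<beta> *\<^sub>R V) $ (i, j) * u j)"
    if "i \<notin> E" "\<forall>j\<in>E. 0 < u j" for i u
  proof -
    have "d i * geom_mean E (lam i) u = \<alpha> * (d i * geom_mean E (lam i) u) + \<beta> * (d i * geom_mean E (lam i) u)"
      using \<open>\<alpha> + \<beta> = 1\<close> by (simp flip: distrib_right)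
    also have "\<dots> \<le> \<alpha> * (\<Sum>j\<in>E. W $ (i, j) * u j) + \<beta> * (\<Sum>j\<in>E. V $ (i, j) * u j)"
      using W V that \<open>0 \<le> \<alpha>\<close> \<open>0 \<le> \<beta>\<close> by (intro add_mono mult_left_mono) (auto simp: dominating_def)
    also have "\<dots> = (\<Sum>j\<in>E. (\<alpha> *\<^sub>R W + \<beta> *\<^sub>R V) $ (i, j) * u j)"
      by (simp add: sum_distrib_left sum.distrib algebra_simps)
    finally show ?thesis .
  qed
  then show "dominating E lam d (\<alpha> *\<^sub>R W + \<beta> *\<^sub>R V)"
    using W V \<open>0 \<le> \<alpha>\<close> \<open>0 \<le> \<beta>\<close> by (simp add: dominating_def)
qed

lemma convex_budget_set: "convex (budget_set E lam d)"
proof (rule convexI)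
  fix x y and \<alpha> \<beta> :: real
  assume "x \<in> budget_set E lam d" "y \<in> budget_set E lam d" and \<alpha>\<beta>: "0 \<le> \<alpha>" "0 \<le> \<beta>" "\<alpha> + \<beta> = 1"
  then obtain W V where W: "dominating E lam d W" "\<forall>j\<in>E. (\<Sum>i\<in>-E. W $ (i, j)) \<le> x $ j"
    and V: "dominating E lam d V" "\<forall>j\<in>E. (\<Sum>i\<in>-E. V $ (i, j)) \<le> y $ j"
    and zero: "\<forall>j. j \<notin> E \<longrightarrow> x $ j = 0 \<and> y $ j = 0"
    by (auto simp: budget_set_def)
  have "dominating E lam d (\<alpha> *\<^sub>R W + \<beta> *\<^sub>R V)"
    using convex_dominating W(1) V(1) \<alpha>\<beta> unfolding convex_def by blast
  moreover have "(\<Sum>i\<in>-E. (\<alpha> *\<^sub>R W + \<beta> *\<^sub>R V) $ (i, j)) \<le> (\<alpha> *\<^sub>R x + \<beta> *\<^sub>R y) $ j" if "j \<in> E" for j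
    using W(2) V(2) \<alpha>\<beta> that
    by (simp add: sum.distrib flip: sum_distrib_left) (intro add_mono mult_left_mono, auto)
  ultimately show "\<alpha> *\<^sub>R x + \<beta> *\<^sub>R y \<in> budget_set E lam d"
    using zero by (auto simp: budget_set_def)
qed

lemma budget_set_nonneg:
  assumes "y \<in> budget_set E lam d" "j \<in> E"
  shows "0 \<le> y $ j"
proof -
  obtain W where W: "dominating E lam d W" "(\<Sum>i\<in>-E. W $ (i, j)) \<le> y $ j"
    using assms by (auto simp: budget_set_def)
  moreover have "0 \<le> (\<Sum>i\<in>-E. W $ (i, j))"
    using W(1) by (intro sum_nonneg) (simp add: dominating_def)
  ultimately show ?thesis by linarith
qed

lemma budget_set_add_axis:
  assumes "y \<in> budget_set E lam d" "j \<in> E" "0 \<le> t"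
  shows "y + t *\<^sub>R axis j 1 \<in> budget_set E lam d"
proof -
  obtain W where W: "dominating E lam d W" "\<forall>k\<in>E. (\<Sum>i\<in>-E. W $ (i, k)) \<le> y $ k"
    and zero: "\<forall>k. k \<notin> E \<longrightarrow> y $ k = 0"
    using assms(1) by (auto simp: budget_set_def)
  have "y $ k \<le> (y + t *\<^sub>R axis j 1) $ k" for k
    using assms(3) by (simp add: axis_def)
  then have "\<forall>k\<in>E. (\<Sum>i\<in>-E. W $ (i, k)) \<le> (y + t *\<^sub>R axis j 1) $ k"
    using W(2) order_trans by blast
  moreover have "\<forall>k. k \<notin> E \<longrightarrow> (y + t *\<^sub>R axis j 1) $ k = 0"
    using zero assms(2) by (auto simp: axis_def)
  ultimately show ?thesis
    using W(1) unfolding budget_set_def by blast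
qed

lemma dominating_entry_le_norm:
  assumes W: "dominating E lam d W" and y: "\<forall>j\<in>E. (\<Sum>i\<in>-E. W $ (i, j)) \<le> y $ j"
  shows "\<bar>W $ p\<bar> \<le> norm y"
proof -
  obtain i j where p: "p = (i, j)" by fastforce
  show ?thesis
  proof (cases "i \<notin> E \<and> j \<in> E")
    case True
    have "\<bar>W $ (i, j)\<bar> = W $ (i, j)" using W by (simp add: dominating_def)
    also have "\<dots> \<le> (\<Sum>i\<in>-E. W $ (i, j))"
      using True W by (intro member_le_sum) (auto simp: dominating_def)
    also have "\<dots> \<le> norm y"
      using y True component_le_norm_cart[of y j] by force
    finally show ?thesis using p by simp
  next
    case False
    then have "W $ p = 0" using W p unfolding dominating_def by blast
    then show ?thesis by simp
  qed
qed

text \<open>Dominating matrices for a bounded sequence of budgets are bounded, so a subsequence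
  converges.\<close>
lemma closed_budget_set: "closed (budget_set E lam d)"
  unfolding closed_sequential_limits
proof (intro allI impI, elim conjE)
  fix Y :: "nat \<Rightarrow> real ^ 'a" and l
  assume Y: "\<forall>n. Y n \<in> budget_set E lam d" and lim: "Y \<longlonglongrightarrow> l"
  then have "\<forall>n. \<exists>W. dominating E lam d W \<and> (\<forall>j\<in>E. (\<Sum>i\<in>-E. W $ (i, j)) \<le> Y n $ j)"
    by (simp add: budget_set_def)
  then obtain W where W: "\<And>n. dominating E lam d (W n)"
    "\<And>n j. j \<in> E \<Longrightarrow> (\<Sum>i\<in>-E. W n $ (i, j)) \<le> Y n $ j"
    by metis
  have "Bseq Y" using lim by (intro convergent_imp_Bseq convergentI)
  then obtain B where B: "\<And>n. norm (Y n) \<le> B" by (auto simp: Bseq_def)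
  have entry_bound: "\<bar>W n $ p\<bar> \<le> B" for n p
    using dominating_entry_le_norm[OF W(1)] W(2) B order_trans by blast
  have "norm (W n) \<le> (\<Sum>p\<in>(UNIV :: ('a \<times> 'a) set). B)" for n
    using order_trans[OF norm_le_l1_cart sum_mono] entry_bound by metis
  then have "bounded (range W)"
    unfolding bounded_iff by blast
  then obtain Wl r where r: "strict_mono r" "(W \<circ> r) \<longlonglongrightarrow> Wl"
    using bounded_imp_convergent_subsequence by blast
  have Wlim: "(\<lambda>n. W (r n) $ p) \<longlonglongrightarrow> Wl $ p" for p
    using tendsto_vec_nth[OF r(2)] by (simp add: o_def)
  have Ylim: "(\<lambda>n. Y (r n) $ j) \<longlonglongrightarrow> l $ j" for j
    using tendsto_vec_nth[OF LIMSEQ_subseq_LIMSEQ[OF lim r(1)]] by (simp add: o_def)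
  have "dominating E lam d Wl"
    using closed_sequentially[OF closed_dominating _ r(2)] W(1) by simp
  moreover have "(\<Sum>i\<in>-E. Wl $ (i, j)) \<le> l $ j" if "j \<in> E" for j
  proof (rule LIMSEQ_le[OF _ Ylim])
    show "(\<lambda>n. \<Sum>i\<in>-E. W (r n) $ (i, j)) \<longlonglongrightarrow> (\<Sum>i\<in>-E. Wl $ (i, j))"
      by (intro tendsto_sum Wlim)
    show "\<exists>N. \<forall>n\<ge>N. (\<Sum>i\<in>-E. W (r n) $ (i, j)) \<le> Y (r n) $ j"
      using W(2)[OF that] by blast
  qed
  moreover have "l $ j = 0" if "j \<notin> E" for j
  proof -
    have "(\<lambda>n. Y (r n) $ j) = (\<lambda>n. 0)" using Y that by (simp add: budget_set_def)
    then show ?thesis using Ylim[of j] LIMSEQ_unique[OF _ tendsto_const] by metis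
  qed
  ultimately show "l \<in> budget_set E lam d"
    unfolding budget_set_def by blast
qed

lemma sum_UNIV_split_Compl: "sum g (UNIV :: 'a::finite set) = sum g E + sum g (- E)"
  using sum.Int_Diff[of UNIV g E] by (simp add: Compl_eq_Diff_UNIV)

lemma inner_vec_supported:
  assumes "\<forall>j. j \<notin> E \<longrightarrow> y $ j = 0"
  shows "a \<bullet> y = (\<Sum>j\<in>E. a $ j * y $ j)"
proof -
  have "(\<Sum>j\<in>-E. a $ j * y $ j) = 0"
    using assms by (intro sum.neutral) simp
  then show ?thesis by (simp add: inner_vec_def sum_UNIV_split_Compl[of _ E])
qed

definition tangent_matrix ::
    "'m set \<Rightarrow> ('m \<Rightarrow> 'm \<Rightarrow> real) \<Rightarrow> ('m \<Rightarrow> real) \<Rightarrow> ('m \<Rightarrow> real) \<Rightarrow> real ^ ('m::finite \<times> 'm)" where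
  "tangent_matrix E lam d u = (\<chi> p. if fst p \<notin> E \<and> snd p \<in> E
     then lam (fst p) (snd p) * d (fst p) * geom_mean E (lam (fst p)) u / u (snd p) else 0)"

definition tangent_budget ::
    "'m set \<Rightarrow> ('m \<Rightarrow> 'm \<Rightarrow> real) \<Rightarrow> ('m \<Rightarrow> real) \<Rightarrow> ('m \<Rightarrow> real) \<Rightarrow> real ^ 'm::finite" where
  "tangent_budget E lam d u = (\<chi> j. if j \<in> E then (\<Sum>i\<in>-E. tangent_matrix E lam d u $ (i, j)) else 0)"

lemma tangent_budget_in_budget_set:
  assumes lam: "\<And>i. i \<notin> E \<Longrightarrow> (\<forall>j\<in>E. 0 \<le> lam i j) \<and> sum (lam i) E = 1"
    and d: "\<And>i. i \<notin> E \<Longrightarrow> 0 \<le> d i" and u: "\<forall>j\<in>E. 0 < u j"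
  shows "tangent_budget E lam d u \<in> budget_set E lam d"
proof -
  have "d i * geom_mean E (lam i) v \<le> (\<Sum>j\<in>E. tangent_matrix E lam d u $ (i, j) * v j)"
    if "i \<notin> E" "\<forall>j\<in>E. 0 < v j" for i v
  proof -
    have "d i * geom_mean E (lam i) v \<le> d i * (\<Sum>j\<in>E. (lam i j * geom_mean E (lam i) u / u j) * v j)"
      using lam[OF that(1)] d[OF that(1)] u that(2) by (intro mult_left_mono geom_mean_le_tangent) auto
    also have "\<dots> = (\<Sum>j\<in>E. tangent_matrix E lam d u $ (i, j) * v j)"
      using that(1) by (simp add: sum_distrib_left tangent_matrix_def mult_ac)
    finally show ?thesis .
  qed
  moreover have "0 \<le> tangent_matrix E lam d u $ p" for p
    using lam d u less_imp_le[OF geom_mean_pos[OF u]]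
    by (auto simp: tangent_matrix_def intro!: divide_nonneg_pos mult_nonneg_nonneg)
  ultimately have "dominating E lam d (tangent_matrix E lam d u)"
    by (auto simp: dominating_def tangent_matrix_def)
  then show ?thesis
    by (auto simp: budget_set_def tangent_budget_def)
qed

lemma sum_tangent_budget:
  assumes lam: "\<And>i. i \<notin> E \<Longrightarrow> sum (lam i) E = 1" and u: "\<forall>j\<in>E. 0 < u j"
  shows "(\<Sum>j\<in>E. u j * tangent_budget E lam d u $ j) = (\<Sum>i\<in>-E. d i * geom_mean E (lam i) u)"
proof -
  have "(\<Sum>j\<in>E. u j * tangent_budget E lam d u $ j)
      = (\<Sum>j\<in>E. \<Sum>i\<in>-E. d i * ((lam i j * geom_mean E (lam i) u / u j) * u j))"
    by (auto simp: tangent_budget_def tangent_matrix_def sum_distrib_left mult_ac intro!: sum.cong)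
  also have "\<dots> = (\<Sum>i\<in>-E. d i * (\<Sum>j\<in>E. (lam i j * geom_mean E (lam i) u / u j) * u j))"
    by (subst sum.swap) (simp add: sum_distrib_left)
  also have "\<dots> = (\<Sum>i\<in>-E. d i * geom_mean E (lam i) u)"
    using lam u by (simp add: sum_tangent_weights del: times_divide_eq_left)
  finally show ?thesis .
qed

lemma separating_normal_nonneg:
  fixes a :: "real ^ 'n::finite"
  assumes sep: "\<forall>y\<in>K. b < a \<bullet> y" and "y \<in> K" and up: "\<And>t. 0 \<le> t \<Longrightarrow> y + t *\<^sub>R axis j 1 \<in> K"
  shows "0 \<le> a $ j"
proof (rule ccontr)
  assume "\<not> 0 \<le> a $ j"
  define t where "t = (a \<bullet> y - b) / (- a $ j)"
  have "b < a \<bullet> y" using sep \<open>y \<in> K\<close> by blast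
  then have "0 \<le> t"
    unfolding t_def using \<open>\<not> 0 \<le> a $ j\<close> by (intro divide_nonneg_pos) auto
  moreover have "a \<bullet> (y + t *\<^sub>R axis j 1) = a \<bullet> y + t * a $ j"
    by (simp add: inner_add_right inner_axis)
  moreover have "t * a $ j = b - a \<bullet> y"
    using \<open>\<not> 0 \<le> a $ j\<close> by (simp add: t_def field_simps)
  ultimately show False using sep up by fastforce
qed

text \<open>If the target column sums e were not attainable, a hyperplane would separate them
  from the closed convex budget set; its normal a is nonnegative on E, and the tangent
  budget at a point just above a violates the hypothesis by Euler's identity.\<close>
lemma dominating_matrix_exists:
  fixes e d :: "'m::finite \<Rightarrow> real"
  assumes lam: "\<And>i. i \<notin> E \<Longrightarrow> (\<forall>j\<in>E. 0 \<le> lam i j) \<and> sum (lam i) E = 1"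
    and d: "\<And>i. i \<notin> E \<Longrightarrow> 0 \<le> d i"
    and ineq: "\<And>u. \<forall>j\<in>E. 0 < u j \<Longrightarrow> (\<Sum>i\<in>-E. d i * geom_mean E (lam i) u) \<le> (\<Sum>j\<in>E. e j * u j)"
  shows "\<exists>W. dominating E lam d W \<and> (\<forall>j\<in>E. (\<Sum>i\<in>-E. W $ (i, j)) \<le> e j)"
proof -
  define T where "T = (\<chi> j. if j \<in> E then e j else 0)"
  have "T \<in> budget_set E lam d"
  proof (rule ccontr)
    assume "T \<notin> budget_set E lam d"
    then obtain a b where ab: "a \<bullet> T < b" "\<forall>y\<in>budget_set E lam d. b < a \<bullet> y"
      using separating_hyperplane_closed_point[OF convex_budget_set closed_budget_set] by blast
    have y1: "tangent_budget E lam d (\<lambda>_. 1) \<in> budget_set E lam d"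
      using lam d by (intro tangent_budget_in_budget_set) auto
    have a_nonneg: "0 \<le> a $ j" if "j \<in> E" for j
      by (rule separating_normal_nonneg[OF ab(2) y1 budget_set_add_axis[OF y1 that]])
    define \<delta> where "\<delta> = (b - a \<bullet> T) / (2 * (\<bar>sum e E\<bar> + 1))"
    have "0 < \<delta>" using ab(1) by (simp add: \<delta>_def)
    have "\<delta> * sum e E \<le> \<delta> * (\<bar>sum e E\<bar> + 1)"
      using \<open>0 < \<delta>\<close> by (intro mult_left_mono) auto
    also have "\<dots> = (b - a \<bullet> T) / 2"
      by (simp add: \<delta>_def field_simps add_pos_pos)
    finally have "\<delta> * sum e E \<le> (b - a \<bullet> T) / 2" .
    define u where "u j = a $ j + \<delta>" for j
    have u: "\<forall>j\<in>E. 0 < u j" using a_nonneg \<open>0 < \<delta>\<close> by (simp add: u_def add_nonneg_pos)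
    define y where "y = tangent_budget E lam d u"
    have y: "y \<in> budget_set E lam d"
      unfolding y_def using lam d u by (rule tangent_budget_in_budget_set)
    have "b < (\<Sum>j\<in>E. a $ j * y $ j)"
      using ab(2) y inner_vec_supported[of E y a] by (auto simp: budget_set_def)
    also have "\<dots> \<le> (\<Sum>j\<in>E. u j * y $ j)"
      using budget_set_nonneg[OF y] \<open>0 < \<delta>\<close> by (intro sum_mono mult_right_mono) (auto simp: u_def)
    also have "\<dots> \<le> (\<Sum>j\<in>E. e j * u j)"
      using sum_tangent_budget[of E lam u d] lam u ineq by (simp add: y_def)
    also have "\<dots> = a \<bullet> T + \<delta> * sum e E"
      using inner_vec_supported[of E T a] by (simp add: T_def u_def algebra_simps sum.distrib sum_distrib_left)
    finally show False using \<open>\<delta> * sum e E \<le> (b - a \<bullet> T) / 2\<close> ab(1) by simp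
  qed
  then show ?thesis by (auto simp: budget_set_def T_def)
qed

lemma nonneg_in_C_AGE: "(\<And>i. 0 \<le> c i) \<Longrightarrow> c \<in> C_AGE a k"
  by (simp add: C_AGE_def C_NNS_def Sig_def sum_nonneg)

text \<open>Under the substitution u j = exp (a j \<bullet> x) the exponential at the non-vertex a k is the
  geometric mean of the u j, so the row inequality makes the signomial nonnegative.\<close>
lemma dominating_row_in_C_AGE:
  fixes a :: "'m::finite \<Rightarrow> nat ^ 'n::finite"
  assumes bary: "barycentric E (\<lambda>j. col_real (a j)) l (col_real (a k))" and k: "k \<notin> E"
    and w: "\<forall>j\<in>E. 0 \<le> w j"
    and dom: "\<And>u. \<forall>j\<in>E. 0 < u j \<Longrightarrow> d * geom_mean E l u \<le> (\<Sum>j\<in>E. w j * u j)"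
  shows "(\<lambda>i. if i \<in> E then w i else if i = k then - d else 0) \<in> C_AGE a k"
proof -
  let ?c = "\<lambda>i. if i \<in> E then w i else if i = k then - d else 0"
  have "0 \<le> Sig a ?c x" for x
  proof -
    define u where "u j = exp (col_real (a j) \<bullet> x)" for j
    have "Sig a ?c x = (\<Sum>i\<in>E. w i * u i) + (\<Sum>i\<in>-E. if i = k then - d * u k else 0)"
      unfolding Sig_def sum_UNIV_split_Compl[of _ E] u_def
      by (intro arg_cong2[where f = "(+)"] sum.cong) auto
    also have "\<dots> = (\<Sum>i\<in>E. w i * u i) - d * geom_mean E l u"
      using k geom_mean_exp_inner[OF finite bary, of x] by (simp add: u_def[abs_def])
    finally show ?thesis
      using dom[of u] by (simp add: u_def)
  qed
  then show ?thesis
    using w by (simp add: C_AGE_def C_NNS_def)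
qed

lemma C_SAGE_of_dominating_matrix:
  fixes a :: "'m::finite \<Rightarrow> nat ^ 'n::finite"
  assumes bary: "\<And>i. i \<notin> E \<Longrightarrow> barycentric E (\<lambda>j. col_real (a j)) (lam i) (col_real (a i))"
    and W: "dominating E lam (\<lambda>i. - c i) W" "\<forall>j\<in>E. (\<Sum>i\<in>-E. W $ (i, j)) \<le> c j"
  shows "c \<in> C_SAGE a"
proof -
  define \<nu> where "\<nu> k = (if k \<in> E then (\<lambda>l. if l = k then c k - (\<Sum>i\<in>-E. W $ (i, k)) else 0)
    else (\<lambda>l. if l \<in> E then W $ (k, l) else if l = k then c k else 0))" for k
  have "\<nu> k \<in> C_AGE a k" for k
  proof (cases "k \<in> E")
    case True
    then show ?thesis using W(2) by (intro nonneg_in_C_AGE) (simp add: \<nu>_def)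
  next
    case False
    have "(\<lambda>l. if l \<in> E then W $ (k, l) else if l = k then - (- c k) else 0) \<in> C_AGE a k"
      using W(1) False by (intro dominating_row_in_C_AGE[OF bary]) (auto simp: dominating_def)
    then show ?thesis using False unfolding minus_minus \<nu>_def by simp
  qed
  moreover have "c i = (\<Sum>k\<in>UNIV. \<nu> k i)" for i
  proof (cases "i \<in> E")
    case True
    have "(\<Sum>k\<in>E. \<nu> k i) = (\<Sum>k\<in>E. if k = i then c i - (\<Sum>j\<in>-E. W $ (j, i)) else 0)"
      by (intro sum.cong) (auto simp: \<nu>_def)
    then have "(\<Sum>k\<in>E. \<nu> k i) = c i - (\<Sum>k\<in>-E. W $ (k, i))"
      using True by simp
    moreover have "(\<Sum>k\<in>-E. \<nu> k i) = (\<Sum>k\<in>-E. W $ (k, i))"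
      using True by (intro sum.cong) (auto simp: \<nu>_def)
    ultimately show ?thesis by (simp add: sum_UNIV_split_Compl[of _ E])
  next
    case False
    have "(\<Sum>k\<in>E. \<nu> k i) = 0"
      using False by (intro sum.neutral) (auto simp: \<nu>_def)
    moreover have "(\<Sum>k\<in>-E. \<nu> k i) = (\<Sum>k\<in>-E. if k = i then c i else 0)"
      using False by (intro sum.cong) (auto simp: \<nu>_def)
    then have "(\<Sum>k\<in>-E. \<nu> k i) = c i"
      using False by simp
    ultimately show ?thesis by (simp add: sum_UNIV_split_Compl[of _ E])
  qed
  ultimately show ?thesis
    unfolding C_SAGE_def by blast
qed

lemma C_SAGE_of_geom_extension_nonneg:
  fixes a :: "'m::finite \<Rightarrow> nat ^ 'n::finite"
  assumes bary: "\<And>i. i \<notin> E \<Longrightarrow> barycentric E (\<lambda>j. col_real (a j)) (lam i) (col_real (a i))"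
    and neg: "\<And>i. i \<notin> E \<Longrightarrow> c i \<le> 0"
    and nonneg: "\<And>u. \<forall>j\<in>E. 0 < u j \<Longrightarrow> 0 \<le> (\<Sum>k\<in>UNIV. c k * geom_extension E lam u k)"
  shows "c \<in> C_SAGE a"
proof -
  have "(\<Sum>i\<in>-E. - c i * geom_mean E (lam i) u) \<le> (\<Sum>j\<in>E. c j * u j)" if "\<forall>j\<in>E. 0 < u j" for u
    using nonneg[OF that]
    by (simp add: sum_UNIV_split_Compl[of _ E] geom_extension_def sum_negf)
  moreover have "\<And>i. i \<notin> E \<Longrightarrow> (\<forall>j\<in>E. 0 \<le> lam i j) \<and> sum (lam i) E = 1"
    using bary by (simp add: barycentric_def)
  ultimately obtain W where "dominating E lam (\<lambda>i. - c i) W" "\<forall>j\<in>E. (\<Sum>i\<in>-E. W $ (i, j)) \<le> c j"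
    using dominating_matrix_exists[of E lam "\<lambda>i. - c i" c] neg by force
  then show ?thesis using C_SAGE_of_dominating_matrix[of E a lam c W] bary by blast
qed

section \<open>Nonnegative polynomials with simplicial Newton polytope\<close>

lemma extreme_points_Newton:
  "{v. v extreme_point_of Newton a} = (\<lambda>i. col_real (a i)) ` (- nonextremal a)"
proof (intro set_eqI iffI)
  fix v assume v: "v \<in> {v. v extreme_point_of Newton a}"
  then have "v \<in> range (\<lambda>i. col_real (a i))"
    unfolding Newton_def by (auto intro: extreme_point_of_convex_hull)
  with v show "v \<in> (\<lambda>i. col_real (a i)) ` (- nonextremal a)"
    by (auto simp: nonextremal_def)
qed (auto simp: nonextremal_def)

lemma inj_col_real: "inj col_real"
  by (simp add: inj_def col_real_def vec_eq_iff)

lemma inj_on_col_real_comp: "inj a \<Longrightarrow> inj_on (\<lambda>i. col_real (a i)) E"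
  using inj_col_real by (auto simp: inj_on_def inj_def)

lemma Newton_barycentric_exists:
  assumes "inj a"
  shows "\<exists>l. barycentric (- nonextremal a) (\<lambda>j. col_real (a j)) l (col_real (a i))"
proof -
  let ?f = "\<lambda>j. col_real (a j)" and ?E = "- nonextremal a"
  have "?f i \<in> Newton a"
    unfolding Newton_def by (rule hull_inc) simp
  also have "Newton a = convex hull (?f ` ?E)"
    using Krein_Milman_polytope[of "range ?f"] by (simp add: Newton_def flip: extreme_points_Newton)
  finally obtain u where u: "\<forall>y\<in>?f ` ?E. 0 \<le> u y" "sum u (?f ` ?E) = 1" "(\<Sum>y\<in>?f ` ?E. u y *\<^sub>R y) = ?f i"
    by (auto simp: convex_hull_finite)
  have "barycentric ?E ?f (u \<circ> ?f) (?f i)"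
    using u inj_on_col_real_comp[OF assms] by (simp add: barycentric_def sum.reindex)
  then show ?thesis by blast
qed

lemma C_NNP_geom_extension_nonneg:
  fixes a :: "'m::finite \<Rightarrow> nat ^ 'n::finite"
  assumes c: "c \<in> C_NNP a"
    and interp: "\<And>t. \<exists>x s. \<forall>j\<in>E. col_real (a j) \<bullet> x + s = t j"
    and bary: "\<And>i. i \<notin> E \<Longrightarrow> barycentric E (\<lambda>j. col_real (a j)) (lam i) (col_real (a i))"
    and u: "\<forall>j\<in>E. 0 < u j"
  shows "0 \<le> (\<Sum>k\<in>UNIV. c k * monomial (a k) s * geom_extension E lam u k)"
proof -
  obtain x t where "0 < t" and t: "\<forall>k. exp (col_real (a k) \<bullet> x) = t * geom_extension E lam u k"
    using exp_inner_eq_geom_extension[OF finite interp bary u] by blast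
  have "0 \<le> Poly a c (\<chi> j. s $ j * exp (x $ j))"
    using c by (simp add: C_NNP_def)
  also have "\<dots> = t * (\<Sum>k\<in>UNIV. c k * monomial (a k) s * geom_extension E lam u k)"
    by (simp add: Poly_sign_exp t sum_distrib_left mult_ac)
  finally show ?thesis
    using \<open>0 < t\<close> by (simp add: zero_le_mult_iff)
qed

lemma sig_rep_eq_if_coeff_sign_nonneg:
  assumes nonneg: "\<And>s. sign_vector s \<Longrightarrow> 0 \<le> c j * monomial (a j) s" and s: "sign_vector s"
  shows "c j * monomial (a j) s = sig_rep a c j"
proof (cases "even_col (a j)")
  case True
  then show ?thesis using monomial_even_col[OF s True] by (simp add: sig_rep_def)
next
  case False
  then obtain j' where "odd (a j $ j')" by (auto simp: even_col_def)
  then have "0 \<le> - c j"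
    using nonneg[OF sign_vector_sign_flip[of j']] by (simp add: monomial_sign_flip)
  moreover have "0 \<le> c j"
    using nonneg[OF sign_vector_ones] by simp
  ultimately show ?thesis using False by (simp add: sig_rep_def)
qed

lemma C_NNP_subset_C_POLY_SAGE:
  fixes a :: "'m::finite \<Rightarrow> nat ^ 'n::finite"
  assumes inj: "inj a"
    and aff: "\<not> affine_dependent {v. v extreme_point_of Newton a}"
    and F2: "F2_lin_indep_mod2 a (nonextremal a)"
  shows "C_NNP a \<subseteq> C_POLY_SAGE a"
proof
  fix c assume c: "c \<in> C_NNP a"
  let ?E = "- nonextremal a"
  obtain lam where bary: "\<And>i. barycentric ?E (\<lambda>j. col_real (a j)) (lam i) (col_real (a i))"
    using Newton_barycentric_exists[OF inj] by metis
  have interp: "\<exists>x s. \<forall>j\<in>?E. col_real (a j) \<bullet> x + s = t j" for t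
    using affine_independent_interpolation[OF inj_on_col_real_comp[OF inj]] aff
    by (simp add: extreme_points_Newton)
  have nonneg: "0 \<le> (\<Sum>k\<in>UNIV. c k * monomial (a k) s * geom_extension ?E lam u k)"
    if "\<forall>j\<in>?E. 0 < u j" for s u
    using C_NNP_geom_extension_nonneg[OF c interp bary that] .
  have vertex: "c j * monomial (a j) s = sig_rep a c j" if j: "j \<in> ?E" and "sign_vector s" for j s
  proof (rule sig_rep_eq_if_coeff_sign_nonneg[OF _ \<open>sign_vector s\<close>])
    fix s
    show "0 \<le> c j * monomial (a j) s"
    proof (rule geom_extension_coeff_nonneg[where E = ?E and lam = lam and e = "\<lambda>k. c k * monomial (a k) s"])
      show "sum (lam i) ?E = 1 \<and> lam i j < 1" if "i \<notin> ?E" for i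
        using bary[of i] barycentric_lt_one[OF finite bary inj_on_col_real_comp[OF inj] that j]
        by (simp add: barycentric_def)
    qed (use j nonneg in auto)
  qed
  have odd: "sig_rep a c i = - \<bar>c i\<bar>" if "i \<in> nonextremal a" for i
    using F2_lin_indep_mod2_not_even_col[OF F2 that] by (simp add: sig_rep_def)
  have "\<exists>s. sign_vector s \<and> (\<forall>i\<in>nonextremal a. monomial (a i) s = (if 0 \<le> c i then -1 else 1))"
    by (rule F2_lin_indep_mod2_sign_realizable[OF F2]) simp
  then obtain s0 where s0: "sign_vector s0"
    "\<forall>i\<in>nonextremal a. monomial (a i) s0 = (if 0 \<le> c i then -1 else 1)"
    by blast
  have "c k * monomial (a k) s0 = sig_rep a c k" for k
    using vertex[OF _ s0(1), of k] s0(2) odd[of k] by (cases "k \<in> nonextremal a") auto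
  then have "sig_rep a c \<in> C_SAGE a"
    using nonneg[of _ s0] odd bary
    by (intro C_SAGE_of_geom_extension_nonneg[where E = ?E and lam = lam]) auto
  then show "c \<in> C_POLY_SAGE a"
    by (simp add: C_POLY_SAGE_def)
qed

theorem mainTheorem15:
  fixes a :: "'m::finite \<Rightarrow> nat ^ 'n::finite"
  assumes "inj a"
    and "\<not> affine_dependent {v. v extreme_point_of Newton a}"
    and "F2_lin_indep_mod2 a (nonextremal a)"
  shows "C_POLY_SAGE a = C_NNP a"
  using C_POLY_SAGE_subset_C_NNP C_NNP_subset_C_POLY_SAGE[OF assms] by blast

end
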